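(* In the Game of Cycles played on the $K_4$ board (the complete graph on four vertices embedded in the plane, together with its three bounded cells), Player~2 has a winning strategy.
   Context: The Game of Cycles. A board is a simple connected planar graph embedded in the plane, together with its bounded cells (the bounded faces of the embedding). Two players alternate turns; on a turn a player marks one unmarked edge with an arrow pointing along the edge in one of its two directions. Each edge receives at most one arrow, and arrows have the same effect regardless of who placed them. Moves must obey the sink-source rule: no move may create a sink (a vertex all of whose incident edges are marked with arrows pointing toward it) or a source (a vertex all of whose incident edges are marked with arrows pointing away from it). A player who has a legal move must make one. A cycle cell is a bounded cell all of whose boundary edges are marked with arrows all cycling in the same direction (all clockwise or all counterclockwise) around that cell. The first player to create a cycle cell wins; if play ends (no legal move remains) without a cycle cell having been created, the player who made the last move wins. A winning strategy for a player is a rule for choosing moves that guarantees that player wins regardless of the opponent's moves. *)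

theory Defs
  imports Main
begin

text \<open>A board: vertex set V, edge set E (edges are 2-element vertex sets),
and bounded cells, each given by its boundary cycle as a list of vertices in
cyclic order. An arrow (a marked edge) is a pair (u,v) meaning u points to v.\<close>

type_synonym vertex = nat
type_synonym arrow = "vertex \<times> vertex"

record board =
  verts :: "vertex set"
  edges :: "vertex set set"
  cells :: "vertex list list"

definition marked :: "arrow set \<Rightarrow> vertex set \<Rightarrow> bool" where
  "marked M e \<longleftrightarrow> (\<exists>(u,v)\<in>M. e = {u,v})"

definition is_sink :: "board \<Rightarrow> arrow set \<Rightarrow> vertex \<Rightarrow> bool" where
  "is_sink B M v \<longleftrightarrow> (\<forall>e\<in>edges B. v \<in> e \<longrightarrow> (\<exists>u. e = {u,v} \<and> (u,v) \<in> M))"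

definition is_source :: "board \<Rightarrow> arrow set \<Rightarrow> vertex \<Rightarrow> bool" where
  "is_source B M v \<longleftrightarrow> (\<forall>e\<in>edges B. v \<in> e \<longrightarrow> (\<exists>u. e = {v,u} \<and> (v,u) \<in> M))"

definition legal_move :: "board \<Rightarrow> arrow set \<Rightarrow> arrow \<Rightarrow> bool" where
  "legal_move B M a \<longleftrightarrow>
     (case a of (u,v) \<Rightarrow>
        {u,v} \<in> edges B \<and> u \<noteq> v \<and> \<not> marked M {u,v} \<and>
        (\<forall>w\<in>verts B. \<not> is_sink B (insert a M) w \<and> \<not> is_source B (insert a M) w))"

definition cell_arrows :: "vertex list \<Rightarrow> arrow list" where
  "cell_arrows c = zip c (rotate1 c)"

definition cycle_cell :: "arrow set \<Rightarrow> vertex list \<Rightarrow> bool" where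
  "cycle_cell M c \<longleftrightarrow>
     (\<forall>a\<in>set (cell_arrows c). a \<in> M) \<or> (\<forall>(u,v)\<in>set (cell_arrows c). (v,u) \<in> M)"

definition has_cycle_cell :: "board \<Rightarrow> arrow set \<Rightarrow> bool" where
  "has_cycle_cell B M \<longleftrightarrow> (\<exists>c\<in>set (cells B). cycle_cell M c)"

text \<open>A play is the list of moves made so far; move number i (0-based) is made
by player 1 if i is even and by player 2 if i is odd. Play stops as soon as a
cycle cell is created.\<close>
definition player_of :: "nat \<Rightarrow> nat" where
  "player_of i = (if even i then 1 else 2)"

definition legal_play :: "board \<Rightarrow> arrow list \<Rightarrow> bool" where
  "legal_play B ms \<longleftrightarrow>
     (\<forall>i<length ms. \<not> has_cycle_cell B (set (take i ms)) \<and>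
                    legal_move B (set (take i ms)) (ms ! i))"

definition play_over :: "board \<Rightarrow> arrow list \<Rightarrow> bool" where
  "play_over B ms \<longleftrightarrow> has_cycle_cell B (set ms) \<or> \<not> (\<exists>a. legal_move B (set ms) a)"

definition winner :: "board \<Rightarrow> arrow list \<Rightarrow> nat" where
  "winner B ms =
     (if has_cycle_cell B (set ms)
      then player_of (LEAST i. has_cycle_cell B (set (take (Suc i) ms)))
      else player_of (length ms - 1))"

definition consistent_with :: "nat \<Rightarrow> (arrow list \<Rightarrow> arrow) \<Rightarrow> arrow list \<Rightarrow> bool" where
  "consistent_with p \<sigma> ms \<longleftrightarrow> (\<forall>i<length ms. player_of i = p \<longrightarrow> ms ! i = \<sigma> (take i ms))"

definition winning_strategy :: "board \<Rightarrow> nat \<Rightarrow> (arrow list \<Rightarrow> arrow) \<Rightarrow> bool" where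
  "winning_strategy B p \<sigma> \<longleftrightarrow>
     (\<forall>ms. legal_play B ms \<and> consistent_with p \<sigma> ms \<and> \<not> play_over B ms
            \<and> player_of (length ms) = p \<longrightarrow> legal_move B (set ms) (\<sigma> ms)) \<and>
     (\<forall>ms. legal_play B ms \<and> consistent_with p \<sigma> ms \<and> play_over B ms
            \<longrightarrow> ms \<noteq> [] \<and> winner B ms = p)"

text \<open>The K4 board: outer triangle 0,1,2 with vertex 3 inside, joined to all;
the three bounded cells are the triangles 0-1-3, 1-2-3, 2-0-3.\<close>
definition K4_board :: board where
  "K4_board = \<lparr> verts = {0,1,2,3},
                edges = {{0,1},{1,2},{2,0},{0,3},{1,3},{2,3}},
                cells = [[0,1,3],[1,2,3],[2,0,3]] \<rparr>"

end

theory Submission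
  imports Defs
begin

(* K4 has six edges, so every play ends after at most six moves and the game can be solved by
   backward induction: if the empty history lies in the set of histories from which player p
   can force a win, then always moving back into that set is a winning strategy for p.  For K4
   and p = 2 this membership is verified by an exhaustive minimax search, run with an
   executable legality test that agrees with legal_move on K4. *)

inductive forces_win :: "board \<Rightarrow> nat \<Rightarrow> arrow list \<Rightarrow> bool" for B p where
  game_over:
    "play_over B ms \<Longrightarrow> ms \<noteq> [] \<Longrightarrow> player_of (length ms - 1) = p \<Longrightarrow> forces_win B p ms"
| own_move:
    "\<not> play_over B ms \<Longrightarrow> player_of (length ms) = p \<Longrightarrow> legal_move B (set ms) a \<Longrightarrow>
     forces_win B p (ms @ [a]) \<Longrightarrow> forces_win B p ms"
| opponent_move:
    "\<not> play_over B ms \<Longrightarrow> player_of (length ms) \<noteq> p \<Longrightarrow>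
     (\<And>a. legal_move B (set ms) a \<Longrightarrow> forces_win B p (ms @ [a])) \<Longrightarrow> forces_win B p ms"

definition winning_move :: "board \<Rightarrow> nat \<Rightarrow> arrow list \<Rightarrow> arrow" where
  "winning_move B p ms = (SOME a. legal_move B (set ms) a \<and> forces_win B p (ms @ [a]))"

lemma legal_play_snoc:
  "legal_play B (ms @ [a]) \<longleftrightarrow>
     legal_play B ms \<and> \<not> has_cycle_cell B (set ms) \<and> legal_move B (set ms) a"
  unfolding legal_play_def by (simp add: All_less_Suc nth_append conj_commute)

lemma consistent_with_snoc:
  "consistent_with p \<sigma> (ms @ [a]) \<longleftrightarrow>
     consistent_with p \<sigma> ms \<and> (player_of (length ms) = p \<longrightarrow> a = \<sigma> ms)"
  unfolding consistent_with_def by (simp add: All_less_Suc nth_append conj_commute)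

lemma legal_play_snoc_not_play_over:
  "legal_play B (ms @ [a]) \<Longrightarrow> \<not> play_over B ms"
  unfolding legal_play_snoc play_over_def by blast

(* A legal play never continues past a cycle cell, so the first cycle cell is created by the
   last move. *)
lemma winner_legal_play:
  assumes play: "legal_play B ms" and "ms \<noteq> []"
  shows "winner B ms = player_of (length ms - 1)"
proof (cases "has_cycle_cell B (set ms)")
  case True
  have "(LEAST i. has_cycle_cell B (set (take (Suc i) ms))) = length ms - 1"
  proof (rule Least_equality)
    show "has_cycle_cell B (set (take (Suc (length ms - 1)) ms))"
      using True \<open>ms \<noteq> []\<close> by simp
  next
    fix i
    assume cycle: "has_cycle_cell B (set (take (Suc i) ms))"
    show "length ms - 1 \<le> i"
    proof (rule ccontr)
      assume "\<not> length ms - 1 \<le> i"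
      then have "Suc i < length ms"
        by simp
      with play cycle show False
        unfolding legal_play_def by blast
    qed
  qed
  with True show ?thesis
    by (simp add: winner_def)
qed (simp add: winner_def)

lemma forces_win_winning_move:
  assumes "forces_win B p ms" "\<not> play_over B ms" "player_of (length ms) = p"
  shows "legal_move B (set ms) (winning_move B p ms) \<and> forces_win B p (ms @ [winning_move B p ms])"
proof -
  have "\<exists>a. legal_move B (set ms) a \<and> forces_win B p (ms @ [a])"
    using assms by (cases rule: forces_win.cases) auto
  then show ?thesis
    unfolding winning_move_def by (rule someI_ex)
qed

lemma forces_win_snoc:
  assumes win: "forces_win B p ms" and play: "legal_play B (ms @ [a])"
    and follows: "player_of (length ms) = p \<Longrightarrow> a = winning_move B p ms"
  shows "forces_win B p (ms @ [a])"
proof -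
  have not_over: "\<not> play_over B ms"
    using play by (rule legal_play_snoc_not_play_over)
  show ?thesis
  proof (cases "player_of (length ms) = p")
    case True
    then show ?thesis
      using forces_win_winning_move[OF win not_over] follows by simp
  next
    case False
    have "legal_move B (set ms) a"
      using play by (simp add: legal_play_snoc)
    with win not_over False show ?thesis
      by (cases rule: forces_win.cases) auto
  qed
qed

lemma forces_win_consistent_play:
  assumes "forces_win B p []"
  shows "legal_play B ms \<Longrightarrow> consistent_with p (winning_move B p) ms \<Longrightarrow> forces_win B p ms"
proof (induction ms rule: rev_induct)
  case Nil
  show ?case using assms .
next
  case (snoc a ms)
  then show ?case
    by (intro forces_win_snoc) (simp_all add: legal_play_snoc consistent_with_snoc)
qed

theorem winning_strategy_winning_move:
  assumes "forces_win B p []"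
  shows "winning_strategy B p (winning_move B p)"
  unfolding winning_strategy_def
proof (intro conjI[OF allI allI] impI)
  fix ms
  assume "legal_play B ms \<and> consistent_with p (winning_move B p) ms \<and> \<not> play_over B ms
    \<and> player_of (length ms) = p"
  then show "legal_move B (set ms) (winning_move B p ms)"
    using forces_win_winning_move forces_win_consistent_play[OF assms] by blast
next
  fix ms
  assume play: "legal_play B ms \<and> consistent_with p (winning_move B p) ms \<and> play_over B ms"
  then have "forces_win B p ms"
    using forces_win_consistent_play[OF assms] by blast
  then have "ms \<noteq> [] \<and> player_of (length ms - 1) = p"
    using play by (cases rule: forces_win.cases) auto
  with play show "ms \<noteq> [] \<and> winner B ms = p"
    using winner_legal_play by auto
qed

lemma forces_win_completing_move:
  assumes "\<not> play_over B ms" "player_of (length ms) = p" "legal_move B (set ms) a"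
    and "has_cycle_cell B (insert a (set ms))"
  shows "forces_win B p ms"
proof -
  have "forces_win B p (ms @ [a])"
    using assms by (intro forces_win.game_over) (simp_all add: play_over_def)
  with assms show ?thesis
    by (blast intro: forces_win.own_move)
qed

lemma play_over_iff_filter:
  assumes "\<And>a. legal_move B (set ms) a \<longleftrightarrow> a \<in> set moves \<and> legal (set ms) a"
  shows "play_over B ms \<longleftrightarrow> has_cycle_cell B (set ms) \<or> filter (legal (set ms)) moves = []"
  using assms by (auto simp: play_over_def filter_empty_conv)

(* The test for a move completing a cycle cell is redundant, but cutting the search there
   keeps it small. *)
fun forces_win_search ::
  "board \<Rightarrow> (arrow set \<Rightarrow> arrow \<Rightarrow> bool) \<Rightarrow> arrow list \<Rightarrow> nat \<Rightarrow> nat \<Rightarrow> arrow list \<Rightarrow> bool"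
where
  "forces_win_search B legal moves p 0 ms = False"
| "forces_win_search B legal moves p (Suc n) ms =
     (let next_moves = filter (legal (set ms)) moves in
      if has_cycle_cell B (set ms) \<or> next_moves = []
      then ms \<noteq> [] \<and> player_of (length ms - 1) = p
      else if \<exists>a\<in>set next_moves. has_cycle_cell B (insert a (set ms))
      then player_of (length ms) = p
      else if player_of (length ms) = p
      then \<exists>a\<in>set next_moves. forces_win_search B legal moves p n (ms @ [a])
      else \<forall>a\<in>set next_moves. forces_win_search B legal moves p n (ms @ [a]))"

lemma forces_win_search_sound:
  assumes legal_iff: "\<And>M a. legal_move B M a \<longleftrightarrow> a \<in> set moves \<and> legal M a"
  shows "forces_win_search B legal moves p n ms \<Longrightarrow> forces_win B p ms"
proof (induction n arbitrary: ms)
  case 0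
  then show ?case by simp
next
  case (Suc n)
  define next_moves where "next_moves = filter (legal (set ms)) moves"
  have next_moves_legal: "a \<in> set next_moves \<longleftrightarrow> legal_move B (set ms) a" for a
    by (simp add: next_moves_def legal_iff)
  have over_iff: "play_over B ms \<longleftrightarrow> has_cycle_cell B (set ms) \<or> next_moves = []"
    unfolding next_moves_def using legal_iff by (rule play_over_iff_filter)
  have search: "if play_over B ms then ms \<noteq> [] \<and> player_of (length ms - 1) = p
      else if \<exists>a\<in>set next_moves. has_cycle_cell B (insert a (set ms))
      then player_of (length ms) = p
      else if player_of (length ms) = p
      then \<exists>a\<in>set next_moves. forces_win_search B legal moves p n (ms @ [a])
      else \<forall>a\<in>set next_moves. forces_win_search B legal moves p n (ms @ [a])"
    using Suc.prems unfolding over_iff next_moves_def forces_win_search.simps Let_def .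
  show ?case
  proof (cases "play_over B ms")
    case True
    with search show ?thesis
      by (simp add: forces_win.game_over)
  next
    case not_over: False
    show ?thesis
    proof (cases "\<exists>a\<in>set next_moves. has_cycle_cell B (insert a (set ms))")
      case True
      with search not_over have "player_of (length ms) = p"
        by simp
      with True not_over show ?thesis
        by (auto simp: next_moves_legal intro: forces_win_completing_move)
    next
      case no_completing_move: False
      show ?thesis
      proof (cases "player_of (length ms) = p")
        case True
        with search not_over no_completing_move obtain a where
          "legal_move B (set ms) a" "forces_win_search B legal moves p n (ms @ [a])"
          by (auto simp: next_moves_legal)
        with not_over True show ?thesis
          by (metis forces_win.own_move Suc.IH)
      next
        case False
        with search not_over no_completing_move
        have "\<forall>a\<in>set next_moves. forces_win_search B legal moves p n (ms @ [a])"
          by simp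
        then have "forces_win B p (ms @ [a])" if "legal_move B (set ms) a" for a
          using that by (simp add: next_moves_legal Suc.IH)
        with not_over False show ?thesis
          by (blast intro: forces_win.opponent_move)
      qed
    qed
  qed
qed

(* The order of this list only affects the running time of the search. *)
definition K4_arrows :: "arrow list" where
  "K4_arrows = [(0,3), (1,3), (2,3), (0,1), (1,2), (2,0), (3,0), (3,1), (3,2), (1,0), (2,1), (0,2)]"

definition K4_legal :: "arrow set \<Rightarrow> arrow \<Rightarrow> bool" where
  "K4_legal M a \<longleftrightarrow> a \<notin> M \<and> prod.swap a \<notin> M \<and>
     (\<forall>w\<in>{0,1,2,3}. \<not> (\<forall>x\<in>{0,1,2,3} - {w}. (x, w) \<in> insert a M) \<and>
                     \<not> (\<forall>x\<in>{0,1,2,3} - {w}. (w, x) \<in> insert a M))"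

lemma is_sink_K4_board:
  "w \<in> {0,1,2,3} \<Longrightarrow> is_sink K4_board M w \<longleftrightarrow> (\<forall>x\<in>{0,1,2,3} - {w}. (x, w) \<in> M)"
  unfolding is_sink_def K4_board_def
  by (elim insertE emptyE) (auto simp: doubleton_eq_iff insert_Diff_if)

lemma is_source_K4_board:
  "w \<in> {0,1,2,3} \<Longrightarrow> is_source K4_board M w \<longleftrightarrow> (\<forall>x\<in>{0,1,2,3} - {w}. (w, x) \<in> M)"
  unfolding is_source_def K4_board_def
  by (elim insertE emptyE) (auto simp: doubleton_eq_iff insert_Diff_if)

lemma legal_move_K4_board_iff:
  "legal_move K4_board M a \<longleftrightarrow> a \<in> set K4_arrows \<and> K4_legal M a"
proof -
  obtain u v where a: "a = (u, v)"
    by fastforce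
  have edge: "{u, v} \<in> edges K4_board \<and> u \<noteq> v \<longleftrightarrow> (u, v) \<in> set K4_arrows"
    by (auto simp: K4_board_def K4_arrows_def doubleton_eq_iff)
  have marked: "marked M {u, v} \<longleftrightarrow> (u, v) \<in> M \<or> (v, u) \<in> M"
    by (auto simp: marked_def doubleton_eq_iff)
  have no_sink_source:
    "(\<forall>w\<in>verts K4_board. \<not> is_sink K4_board N w \<and> \<not> is_source K4_board N w) \<longleftrightarrow>
     (\<forall>w\<in>{0,1,2,3}. \<not> (\<forall>x\<in>{0,1,2,3} - {w}. (x, w) \<in> N) \<and>
                     \<not> (\<forall>x\<in>{0,1,2,3} - {w}. (w, x) \<in> N))" for N
    using is_sink_K4_board[of _ N] is_source_K4_board[of _ N]
    by (simp add: K4_board_def)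
  show ?thesis
    unfolding a legal_move_def K4_legal_def prod.case no_sink_source swap_simp
    using edge marked by blast
qed

theorem theorem4p1:
  shows "\<exists>\<sigma>. winning_strategy K4_board 2 \<sigma>"
proof -
  have "forces_win_search K4_board K4_legal K4_arrows 2 7 []"
    by code_simp
  then have "forces_win K4_board 2 []"
    using forces_win_search_sound legal_move_K4_board_iff by blast
  then show ?thesis
    using winning_strategy_winning_move by blast
qed

end
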